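(* Let $p=p(n)\in[0,1]$ and let $x=x(n)$ be an integer with $1\le x\le n$, $x=o(n)$ and $npx=o(1)$. Let $t$ be an integer with $n/(2x)\le t\le n/x$, and let $B_1,\dots,B_t$ be vertex-disjoint trees, each on at most $x$ vertices. Let $H_0$ be the disjoint union of $B_1,\dots,B_t$, and let $R_0:=H_0\cup G_0$, where $G_0$ is the random graph on $V(H_0)$ in which each pair of vertices is an edge independently with probability $p$. Then whp $R_0$ is a forest in which every connected component has $O(x\log(n/x))$ vertices.
   Context: Asymptotics are as $n\to\infty$; whp means with probability $1-o(1)$; $O(\cdot)$ hides an absolute constant. *)

theory Defs
  imports "HOL-Probability.Probability"
begin

definition is_graph :: "'a set \<Rightarrow> 'a set set \<Rightarrow> bool" where
  "is_graph V E \<longleftrightarrow> finite V \<and> (\<forall>e\<in>E. e \<subseteq> V \<and> card e = 2)"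

definition has_cycle :: "'a set \<Rightarrow> 'a set set \<Rightarrow> bool" where
  "has_cycle V E \<longleftrightarrow> (\<exists>vs. length vs \<ge> 3 \<and> distinct vs \<and> set vs \<subseteq> V \<and>
      (\<forall>i < length vs - 1. {vs ! i, vs ! Suc i} \<in> E) \<and> {last vs, hd vs} \<in> E)"

definition forest :: "'a set \<Rightarrow> 'a set set \<Rightarrow> bool" where
  "forest V E \<longleftrightarrow> is_graph V E \<and> \<not> has_cycle V E"

definition reachable :: "'a set \<Rightarrow> 'a set set \<Rightarrow> 'a \<Rightarrow> 'a \<Rightarrow> bool" where
  "reachable V E u v \<longleftrightarrow> u \<in> V \<and> v \<in> V \<and> (u, v) \<in> {(a, b). {a, b} \<in> E}\<^sup>*"

definition components :: "'a set \<Rightarrow> 'a set set \<Rightarrow> 'a set set" where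
  "components V E = {{v \<in> V. reachable V E u v} | u. u \<in> V}"

definition is_tree :: "'a set \<Rightarrow> 'a set set \<Rightarrow> bool" where
  "is_tree V E \<longleftrightarrow> forest V E \<and> V \<noteq> {} \<and> (\<forall>u\<in>V. \<forall>v\<in>V. reachable V E u v)"

definition pairs :: "'a set \<Rightarrow> 'a set set" where
  "pairs V = {e. e \<subseteq> V \<and> card e = 2}"

definition random_graph :: "'a set \<Rightarrow> real \<Rightarrow> 'a set set pmf" where
  "random_graph V p = map_pmf (\<lambda>f. {e \<in> pairs V. f e}) (Pi_pmf (pairs V) False (\<lambda>_. bernoulli_pmf p))"

end

theory Submission
  imports Defs
begin

text \<open>
  Call a set U of the trees dense if the random graph has at least |U| edges between
  vertices of the trees in U (cycle witness), or if |U| = m + 1 and it has at least m such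
  edges (component witness). A cycle in R_0 either lies in one tree, which is impossible
  without a random edge, or visits trees U each of which it enters along its own random
  edge, so U is dense of the first kind. A component with more than x m vertices meets
  at least m + 1 trees, and growing a connected set of trees one random edge at a time
  yields m + 1 of them spanned by at least m random edges.

  A union bound over the choices of U bounds the probability of a dense set of s trees
  by (t choose s) (s x)^(2s) p^s / s!, which is at most q^s with q = e^2 t x^2 p <= e^2 n p x.
  Summing over s gives O(n p x) for cycles, and m = 2 ln(n/x) makes the component
  term O(x/n).
\<close>

lemma power_div_fact_le_exp: "real s ^ s / fact s \<le> exp (real s)"
proof -
  have S: "(\<lambda>n. real s ^ n /\<^sub>R fact n) sums exp (real s)" by (rule exp_converges)
  have "(\<Sum>n\<in>{s}. real s ^ n /\<^sub>R fact n) \<le> (\<Sum>n. real s ^ n /\<^sub>R fact n)"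
    by (rule sum_le_suminf[OF sums_summable[OF S]]) auto
  thus ?thesis using sums_unique[OF S] by (simp add: divide_inverse mult.commute)
qed

lemma binomial_le_pow_div_fact: "real (n choose k) \<le> real n ^ k / fact k"
proof -
  have "real ((n choose k) * fact k) \<le> real (n ^ k)"
    using binomial_fact_pow[of n k] by linarith
  hence "real (n choose k) * fact k \<le> real n ^ k" by simp
  thus ?thesis by (simp add: field_simps)
qed

lemma geometric_sum_le_twice_first:
  fixes q :: real assumes "0 \<le> q" "2 * q \<le> 1"
  shows "(\<Sum>s\<in>{1..N}. q ^ s) \<le> 2 * q"
proof -
  have "(\<Sum>s\<in>{1..N}. q ^ s) \<le> 2 * q - 2 * q ^ Suc N"
  proof (induction N)
    case (Suc N)
    have "2 * q ^ Suc (Suc N) \<le> 1 * q ^ Suc N"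
      using mult_right_mono[OF assms(2), of "q ^ Suc N"] assms(1) by simp
    with Suc show ?case by simp
  qed simp
  moreover have "0 \<le> q ^ Suc N" using assms(1) by simp
  ultimately show ?thesis by linarith
qed

lemma finite_pairs: "finite V \<Longrightarrow> finite (pairs V)"
  unfolding pairs_def by (simp add: finite_Pow_iff)

lemma pairs_mono: "A \<subseteq> B \<Longrightarrow> pairs A \<subseteq> pairs B"
  unfolding pairs_def by auto

lemma card_pairs_le: assumes "finite W" shows "card (pairs W) \<le> card W ^ 2"
proof -
  have "pairs W \<subseteq> (\<lambda>(a, b). {a, b}) ` (W \<times> W)"
    by (auto simp: pairs_def card_2_iff)
  hence "card (pairs W) \<le> card ((\<lambda>(a, b). {a, b}) ` (W \<times> W))"
    by (intro card_mono) (auto simp: assms)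
  also have "\<dots> \<le> card (W \<times> W)" by (rule card_image_le) (simp add: assms)
  finally show ?thesis by (simp add: power2_eq_square card_cartesian_product)
qed

lemma set_pmf_random_graph: "G \<in> set_pmf (random_graph V p) \<Longrightarrow> G \<subseteq> pairs V"
  unfolding random_graph_def by auto

lemma prob_random_graph_contains:
  assumes "finite V" "S \<subseteq> pairs V" "0 \<le> p" "p \<le> 1"
  shows "measure_pmf.prob (random_graph V p) {G. S \<subseteq> G} = p ^ card S"
proof -
  have fin: "finite (pairs V)" by (rule finite_pairs[OF assms(1)])
  have "(\<lambda>f. {e \<in> pairs V. f e}) -` {G. S \<subseteq> G} = Pi (pairs V) (\<lambda>e. if e \<in> S then {True} else UNIV)"
    using assms(2) by (auto simp: Pi_def)
  hence "measure_pmf.prob (random_graph V p) {G. S \<subseteq> G}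
     = (\<Prod>e\<in>pairs V. measure_pmf.prob (bernoulli_pmf p) (if e \<in> S then {True} else UNIV))"
    unfolding random_graph_def measure_map_pmf by (simp add: measure_Pi_pmf_Pi[OF fin])
  also have "\<dots> = (\<Prod>e\<in>pairs V. if e \<in> S then p else 1)"
    by (rule prod.cong) (use assms in \<open>auto simp: measure_pmf_single\<close>)
  also have "\<dots> = p ^ card S"
    using assms(2) fin by (simp add: prod.If_cases Int_absorb1)
  finally show ?thesis .
qed

lemma prob_random_graph_edges_in_ge:
  assumes "finite V" "Q \<subseteq> pairs V" "0 \<le> p" "p \<le> 1"
  shows "measure_pmf.prob (random_graph V p) {G. m \<le> card (G \<inter> Q)} \<le> real (card Q choose m) * p ^ m"
proof -
  let ?M = "random_graph V p" and ?I = "{S. S \<subseteq> Q \<and> card S = m}"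
  have finQ: "finite Q" using finite_pairs[OF assms(1)] assms(2) finite_subset by blast
  have "{G. m \<le> card (G \<inter> Q)} \<subseteq> (\<Union>S\<in>?I. {G. S \<subseteq> G})"
  proof
    fix G assume "G \<in> {G. m \<le> card (G \<inter> Q)}"
    then obtain S where "S \<subseteq> G \<inter> Q" "card S = m"
      using obtain_subset_with_card_n by (metis mem_Collect_eq)
    thus "G \<in> (\<Union>S\<in>?I. {G. S \<subseteq> G})" by auto
  qed
  hence "measure_pmf.prob ?M {G. m \<le> card (G \<inter> Q)} \<le> measure_pmf.prob ?M (\<Union>S\<in>?I. {G. S \<subseteq> G})"
    by (rule measure_pmf.finite_measure_mono) simp
  also have "\<dots> \<le> (\<Sum>S\<in>?I. measure_pmf.prob ?M {G. S \<subseteq> G})"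
    by (rule measure_pmf.finite_measure_subadditive_finite) (use finQ in auto)
  also have "\<dots> = (\<Sum>S\<in>?I. p ^ m)"
    by (rule sum.cong) (use assms in \<open>auto intro!: prob_random_graph_contains\<close>)
  also have "\<dots> = real (card Q choose m) * p ^ m" using n_subsets[OF finQ] by simp
  finally show ?thesis .
qed

definition cyclic_walk :: "'a set \<Rightarrow> 'a set set \<Rightarrow> nat \<Rightarrow> (nat \<Rightarrow> 'a) \<Rightarrow> bool" where
  "cyclic_walk V E L w \<longleftrightarrow> 3 \<le> L \<and> inj_on w {..<L} \<and> (\<forall>k. w (k mod L) = w k) \<and>
     (\<forall>k. w k \<in> V) \<and> (\<forall>k. {w k, w (Suc k)} \<in> E)"

lemma has_cycle_imp_cyclic_walk:
  assumes "has_cycle V E" shows "\<exists>L w. cyclic_walk V E L w"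
proof -
  obtain vs where vs: "length vs \<ge> 3" "distinct vs" "set vs \<subseteq> V"
      "\<forall>i < length vs - 1. {vs ! i, vs ! Suc i} \<in> E" "{last vs, hd vs} \<in> E"
    using assms unfolding has_cycle_def by blast
  define L where "L = length vs"
  define w where "w k = vs ! (k mod L)" for k
  have L: "3 \<le> L" "vs \<noteq> []" using vs(1) by (auto simp: L_def)
  have "{w k, w (Suc k)} \<in> E" for k
  proof (cases "Suc (k mod L) < L")
    case True
    hence "Suc k mod L = Suc (k mod L)" by (simp add: mod_Suc)
    thus ?thesis using vs(4) True unfolding w_def L_def by auto
  next
    case False
    moreover have "k mod L < L" using L(1) by simp
    ultimately have last: "Suc (k mod L) = L" by linarith
    hence "k mod L = L - 1" by simp
    hence "w k = last vs" using L unfolding w_def by (simp add: last_conv_nth L_def)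
    moreover have "w (Suc k) = hd vs" using last L unfolding w_def by (simp add: mod_Suc hd_conv_nth)
    ultimately show ?thesis using vs(5) by (simp add: insert_commute)
  qed
  moreover have "inj_on w {..<L}"
    using vs(2) unfolding w_def L_def by (auto simp: inj_on_def nth_eq_iff_index_eq)
  moreover have "w k \<in> V" for k using vs(3) L unfolding w_def L_def by auto
  ultimately have "cyclic_walk V E L w" using L unfolding cyclic_walk_def w_def by auto
  thus ?thesis by blast
qed

lemma cyclic_walk_imp_has_cycle:
  assumes "cyclic_walk V E L w" shows "has_cycle V E"
  unfolding has_cycle_def
proof (intro exI[of _ "map w [0..<L]"] conjI)
  have L: "3 \<le> L" "inj_on w {..<L}" "\<forall>k. w (k mod L) = w k" "\<forall>k. w k \<in> V" "\<forall>k. {w k, w (Suc k)} \<in> E"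
    using assms unfolding cyclic_walk_def by auto
  show "3 \<le> length (map w [0..<L])" "distinct (map w [0..<L])" "set (map w [0..<L]) \<subseteq> V"
    using L(1,2,4) by (auto simp: distinct_map lessThan_atLeast0)
  show "\<forall>i < length (map w [0..<L]) - 1. {map w [0..<L] ! i, map w [0..<L] ! Suc i} \<in> E"
    using L(5) by simp
  have "w L = w 0" using L(3) spec[OF L(3), of L] by simp
  thus "{last (map w [0..<L]), hd (map w [0..<L])} \<in> E"
    using L(1) L(5) spec[OF L(5), of "L - 1"] by (simp add: last_map hd_map)
qed

lemma cyclic_walk_vertex_eq:
  assumes "cyclic_walk V E L w" "w a = w b" shows "a mod L = b mod L"
proof -
  have "0 < L" "inj_on w {..<L}" "w (a mod L) = w (b mod L)"
    using assms unfolding cyclic_walk_def by auto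
  thus ?thesis by (auto dest: inj_onD)
qed

lemma cyclic_walk_step_neq:
  assumes w: "cyclic_walk V E L w" shows "w k \<noteq> w (Suc k)"
proof
  assume "w k = w (Suc k)"
  hence "k mod L = Suc k mod L" by (rule cyclic_walk_vertex_eq[OF w])
  moreover have "3 \<le> L" using w by (simp add: cyclic_walk_def)
  ultimately show False by (auto simp: mod_Suc split: if_splits)
qed

lemma cyclic_walk_edge_eq:
  assumes w: "cyclic_walk V E L w" and e: "{w a, w (Suc a)} = {w b, w (Suc b)}"
  shows "a mod L = b mod L"
proof -
  have L: "3 \<le> L" using w unfolding cyclic_walk_def by simp
  from e consider "w a = w b" | "w a = w (Suc b)" "w (Suc a) = w b"
    by (auto simp: doubleton_eq_iff)
  thus ?thesis
  proof cases
    case 2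
    \<comment> \<open>the same edge traversed in both directions forces L \<le> 2\<close>
    hence "a mod L = Suc b mod L" "Suc a mod L = b mod L"
      using cyclic_walk_vertex_eq[OF w] by blast+
    hence "(b + 2) mod L = b mod L" by (metis add_2_eq_Suc' mod_Suc_eq)
    hence "L dvd 2" using mod_eq_dvd_iff_nat[of b "b + 2" L] by simp
    hence "L \<le> 2" by (simp add: dvd_imp_le)
    with L show ?thesis by simp
  qed (rule cyclic_walk_vertex_eq[OF w])
qed

lemma periodic_in_image:
  fixes L k :: nat
  assumes "\<forall>k. f (k mod L) = f k" "0 < L" shows "f k \<in> f ` {..<L}"
proof (rule image_eqI)
  show "f k = f (k mod L)" using assms(1) by simp
  show "k mod L \<in> {..<L}" using assms(2) by simp
qed

lemma periodic_enters_value: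
  assumes per: "\<forall>k. f (k mod L) = f k" and "0 < L" and i: "f i \<noteq> u" and j: "f j = u"
  shows "\<exists>k<L. f k \<noteq> u \<and> f (Suc k) = u"
proof (rule ccontr)
  assume none: "\<not> ?thesis"
  have stays: "f (Suc k) \<noteq> u" if "f k \<noteq> u" for k
  proof
    assume "f (Suc k) = u"
    moreover have "f (Suc (k mod L)) = f (Suc k)" using per by (metis mod_Suc_eq)
    moreover have "f (k mod L) \<noteq> u" using per that by simp
    ultimately show False using none mod_less_divisor[OF \<open>0 < L\<close>, of k] by auto
  qed
  have "i \<le> L * i" using \<open>0 < L\<close> by simp
  hence "i + (j + L * i - i) = j + L * i" by linarith
  moreover have "f (j + L * i) = u" using j spec[OF per, of "j + L * i"] spec[OF per, of j] by simp
  moreover have "f (i + d) \<noteq> u" for d by (induction d) (use i stays in auto)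
  ultimately show False by metis
qed

definition edge_rel :: "'a set set \<Rightarrow> ('a \<times> 'a) set" where
  "edge_rel E = {(a, b). {a, b} \<in> E}"

lemma sym_edge_rel: "sym (edge_rel E)"
  unfolding edge_rel_def by (auto intro: symI simp: insert_commute)

lemma reachable_iff_edge_rel: "reachable V E u v \<longleftrightarrow> u \<in> V \<and> v \<in> V \<and> (u, v) \<in> (edge_rel E)\<^sup>*"
  unfolding reachable_def edge_rel_def ..

lemma components_subset: "K \<in> components V E \<Longrightarrow> K \<subseteq> V"
  by (auto simp: components_def)

lemma mem_component_iff:
  assumes "K \<in> components V E" "a \<in> K"
  shows "b \<in> K \<longleftrightarrow> b \<in> V \<and> (a, b) \<in> (edge_rel E)\<^sup>*"
proof -
  obtain u where u: "u \<in> V" "K = {v \<in> V. (u, v) \<in> (edge_rel E)\<^sup>*}"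
    using assms(1) by (auto simp: components_def reachable_iff_edge_rel)
  have "(u, a) \<in> (edge_rel E)\<^sup>*" "(a, u) \<in> (edge_rel E)\<^sup>*"
    using assms(2) u symD[OF sym_rtrancl[OF sym_edge_rel]] by auto
  thus ?thesis using u by (auto intro: rtrancl_trans)
qed

lemma component_leaving_edge:
  assumes K: "K \<in> components V E" and "is_graph V E" and a: "a \<in> K" "a \<in> S" and b: "b \<in> K" "b \<notin> S"
  shows "\<exists>y z. y \<in> S \<and> z \<in> K - S \<and> {y, z} \<in> E"
proof -
  have "(a, b) \<in> (edge_rel E)\<^sup>*" using b mem_component_iff[OF K a(1)] by blast
  then obtain y z where "y \<in> S" "z \<notin> S" "(y, z) \<in> edge_rel E" "(a, z) \<in> (edge_rel E)\<^sup>*"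
    using a(2) b(2)
  proof (induction arbitrary: thesis rule: rtrancl_induct)
    case (step c d)
    show ?case
    proof (cases "c \<in> S")
      case True
      thus ?thesis using step.hyps step.prems by (blast intro: rtrancl_into_rtrancl)
    next
      case False
      thus ?thesis using step.IH step.prems by blast
    qed
  qed simp
  moreover from this have "z \<in> V"
    using \<open>is_graph V E\<close> by (auto simp: edge_rel_def is_graph_def)
  ultimately show ?thesis using mem_component_iff[OF K a(1)] by (auto simp: edge_rel_def)
qed

locale tree_family =
  fixes t :: nat and B :: "nat \<Rightarrow> 'a set" and BE :: "nat \<Rightarrow> 'a set set" and x :: nat
  assumes trees: "i < t \<Longrightarrow> is_tree (B i) (BE i)"
    and card_tree_le: "i < t \<Longrightarrow> card (B i) \<le> x"
    and disjoint: "i < t \<Longrightarrow> j < t \<Longrightarrow> i \<noteq> j \<Longrightarrow> B i \<inter> B j = {}"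
begin

abbreviation vertex_set :: "'a set" where "vertex_set \<equiv> \<Union>i<t. B i"

abbreviation tree_edges :: "'a set set" where "tree_edges \<equiv> \<Union>i<t. BE i"

definition vertices_of :: "nat set \<Rightarrow> 'a set" where
  "vertices_of U = (\<Union>u\<in>U. B u)"

definition dense_clusters :: "nat \<Rightarrow> nat \<Rightarrow> 'a set set set" where
  "dense_clusters s m = {G. \<exists>U \<subseteq> {..<t}. card U = s \<and> m \<le> card (G \<inter> pairs (vertices_of U))}"

definition tree_of :: "'a \<Rightarrow> nat" where
  "tree_of v = (THE i. i < t \<and> v \<in> B i)"

lemma finite_tree: "i < t \<Longrightarrow> finite (B i)"
  using trees by (auto simp: is_tree_def forest_def is_graph_def)

lemma tree_nonempty: "i < t \<Longrightarrow> B i \<noteq> {}"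
  using trees by (auto simp: is_tree_def)

lemma tree_edgeD: "i < t \<Longrightarrow> e \<in> BE i \<Longrightarrow> e \<subseteq> B i \<and> card e = 2"
  using trees by (auto simp: is_tree_def forest_def is_graph_def)

lemma finite_vertices_of: "U \<subseteq> {..<t} \<Longrightarrow> finite (vertices_of U)"
  unfolding vertices_of_def using finite_tree finite_subset[of U "{..<t}"] by auto

lemma card_vertices_of_le: assumes "U \<subseteq> {..<t}" shows "card (vertices_of U) \<le> card U * x"
proof -
  have "card (vertices_of U) \<le> (\<Sum>u\<in>U. card (B u))"
    unfolding vertices_of_def by (rule card_UN_le) (use assms finite_subset in auto)
  also have "\<dots> \<le> (\<Sum>u\<in>U. x)" by (rule sum_mono) (use assms card_tree_le in auto)
  finally show ?thesis by simp
qed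

lemma tree_of_eq: "v \<in> B i \<Longrightarrow> i < t \<Longrightarrow> tree_of v = i"
  unfolding tree_of_def by (rule the_equality) (use disjoint in blast)+

lemma tree_of_mem: "v \<in> vertex_set \<Longrightarrow> tree_of v < t \<and> v \<in> B (tree_of v)"
  using tree_of_eq by auto

lemma is_graph_with_random_edges:
  "G \<subseteq> pairs vertex_set \<Longrightarrow> is_graph vertex_set (tree_edges \<union> G)"
  using finite_tree tree_edgeD by (auto simp: is_graph_def pairs_def) blast

lemma edge_between_trees_is_random:
  assumes "{a, b} \<in> tree_edges \<union> G" "a \<in> B i" "b \<notin> B i" "i < t"
  shows "{a, b} \<in> G"
proof (rule ccontr)
  assume "{a, b} \<notin> G"
  then obtain j where "j < t" "{a, b} \<subseteq> B j" using assms(1) tree_edgeD by blast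
  with assms(2-4) disjoint show False by blast
qed

lemma prob_dense_clusters:
  assumes "0 \<le> p" "p \<le> 1"
  shows "measure_pmf.prob (random_graph vertex_set p) (dense_clusters s m)
    \<le> real (t choose s) * real ((s * x)\<^sup>2) ^ m / fact m * p ^ m"
proof -
  let ?M = "random_graph vertex_set p" and ?I = "{U. U \<subseteq> {..<t} \<and> card U = s}"
  have "measure_pmf.prob ?M (dense_clusters s m)
      = measure_pmf.prob ?M (\<Union>U\<in>?I. {G. m \<le> card (G \<inter> pairs (vertices_of U))})"
    unfolding dense_clusters_def by (rule arg_cong[where f = "measure_pmf.prob ?M"]) auto
  also have "\<dots> \<le> (\<Sum>U\<in>?I. measure_pmf.prob ?M {G. m \<le> card (G \<inter> pairs (vertices_of U))})"
    by (rule measure_pmf.finite_measure_subadditive_finite) auto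
  also have "\<dots> \<le> (\<Sum>U\<in>?I. real ((s * x)\<^sup>2) ^ m / fact m * p ^ m)"
  proof (rule sum_mono)
    fix U assume U: "U \<in> ?I"
    hence sub: "vertices_of U \<subseteq> vertex_set" by (auto simp: vertices_of_def)
    have "card (pairs (vertices_of U)) \<le> card (vertices_of U) ^ 2"
      using U by (intro card_pairs_le finite_vertices_of) auto
    also have "\<dots> \<le> (s * x)\<^sup>2" using card_vertices_of_le[of U] U by (intro power_mono) auto
    finally have "real (card (pairs (vertices_of U))) \<le> real ((s * x)\<^sup>2)"
      by (simp only: of_nat_le_iff)
    hence "real (card (pairs (vertices_of U))) ^ m \<le> real ((s * x)\<^sup>2) ^ m"
      by (rule power_mono) simp
    moreover have "measure_pmf.prob ?M {G. m \<le> card (G \<inter> pairs (vertices_of U))}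
        \<le> real (card (pairs (vertices_of U)) choose m) * p ^ m"
      using sub assms by (intro prob_random_graph_edges_in_ge pairs_mono) (auto intro: finite_tree)
    ultimately show "measure_pmf.prob ?M {G. m \<le> card (G \<inter> pairs (vertices_of U))}
        \<le> real ((s * x)\<^sup>2) ^ m / fact m * p ^ m"
      using binomial_le_pow_div_fact[of "card (pairs (vertices_of U))" m] assms(1)
      by (smt (verit) divide_right_mono fact_ge_zero mult_right_mono zero_le_power)
  qed
  also have "\<dots> = real (t choose s) * real ((s * x)\<^sup>2) ^ m / fact m * p ^ m"
    using n_subsets[of "{..<t}" s] by simp
  finally show ?thesis .
qed


lemma cyclic_walk_in_tree_uses_random_edge:
  assumes w: "cyclic_walk vertex_set (tree_edges \<union> G) L w" and u: "u < t" "\<And>k. w k \<in> B u"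
  shows "\<exists>k. {w k, w (Suc k)} \<in> G"
proof (rule ccontr)
  assume no_random: "\<not> ?thesis"
  have "{w k, w (Suc k)} \<in> BE u" for k
  proof -
    obtain j where j: "j < t" "{w k, w (Suc k)} \<in> BE j"
      using w no_random unfolding cyclic_walk_def by blast
    hence "w k \<in> B j" using tree_edgeD by blast
    hence "j = u" using disjoint j(1) u by blast
    thus ?thesis using j by simp
  qed
  hence "cyclic_walk (B u) (BE u) L w" using w u(2) by (auto simp: cyclic_walk_def)
  hence "has_cycle (B u) (BE u)" by (rule cyclic_walk_imp_has_cycle)
  thus False using trees[OF u(1)] by (simp add: is_tree_def forest_def)
qed

lemma cyclic_walk_tree_of_mem:
  assumes "cyclic_walk V E L w" shows "tree_of (w k) \<in> (\<lambda>k. tree_of (w k)) ` {..<L}"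
  using assms by (intro periodic_in_image) (auto simp: cyclic_walk_def)

lemma cyclic_walk_enters_tree:
  assumes w: "cyclic_walk V E L w" and U: "U = (\<lambda>k. tree_of (w k)) ` {..<L}"
    and two: "2 \<le> card U" and u: "u \<in> U"
  shows "\<exists>k<L. tree_of (w k) \<noteq> u \<and> tree_of (w (Suc k)) = u"
proof -
  have "finite U" using U by simp
  hence "\<not> (\<forall>a\<in>U. \<forall>b\<in>U. a = b)" using two card_le_Suc0_iff_eq[of U] by auto
  then obtain v where "v \<in> U" "v \<noteq> u" by blast
  then obtain i where i: "tree_of (w i) \<noteq> u" using U by auto
  obtain j where j: "tree_of (w j) = u" using u U by blast
  have "\<forall>k. tree_of (w (k mod L)) = tree_of (w k)" "0 < L"
    using w by (auto simp: cyclic_walk_def)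
  from periodic_enters_value[OF this i j] show ?thesis .
qed

lemma cyclic_walk_random_edges_ge_trees:
  assumes w: "cyclic_walk vertex_set (tree_edges \<union> G) L w"
    and U: "U = (\<lambda>k. tree_of (w k)) ` {..<L}" and two: "2 \<le> card U"
  shows "card U \<le> card (G \<inter> pairs (vertices_of U))"
proof -
  have wV: "\<And>k. w k \<in> vertex_set" and wE: "\<And>k. {w k, w (Suc k)} \<in> tree_edges \<union> G"
    using w unfolding cyclic_walk_def by auto
  obtain entry where entry: "\<And>u. u \<in> U \<Longrightarrow>
      entry u < L \<and> tree_of (w (entry u)) \<noteq> u \<and> tree_of (w (Suc (entry u))) = u"
    using cyclic_walk_enters_tree[OF w U two] by metis
  \<comment> \<open>distinct trees are entered along distinct edges of the cycle\<close>
  define edge where "edge u = {w (entry u), w (Suc (entry u))}" for u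
  have "inj_on edge U"
  proof (rule inj_onI)
    fix u v assume uv: "u \<in> U" "v \<in> U" "edge u = edge v"
    hence "entry u mod L = entry v mod L"
      using cyclic_walk_edge_eq[OF w] unfolding edge_def by blast
    hence "entry u = entry v" using entry uv(1,2) by simp
    thus "u = v" using entry uv(1,2) by metis
  qed
  moreover have "edge ` U \<subseteq> G \<inter> pairs (vertices_of U)"
  proof safe
    fix u assume u: "u \<in> U"
    let ?k = "entry u"
    have k: "tree_of (w ?k) < t" "w ?k \<in> B (tree_of (w ?k))" using tree_of_mem[OF wV] by auto
    have "w (Suc ?k) \<notin> B (tree_of (w ?k))"
      using entry[OF u] tree_of_eq[OF _ k(1)] by metis
    thus "edge u \<in> G" unfolding edge_def by (rule edge_between_trees_is_random[OF wE k(2) _ k(1)])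
    have "w k \<in> vertices_of U" for k
      unfolding vertices_of_def using tree_of_mem[OF wV, of k] cyclic_walk_tree_of_mem[OF w, of k] U
      by blast
    moreover have "card (edge u) = 2" using cyclic_walk_step_neq[OF w] by (simp add: edge_def)
    ultimately show "edge u \<in> pairs (vertices_of U)" by (auto simp: pairs_def edge_def)
  qed
  moreover have "finite (G \<inter> pairs (vertices_of U))"
    using U tree_of_mem[OF wV] by (auto intro!: finite_pairs finite_vertices_of)
  ultimately show ?thesis by (rule card_inj_on_le)
qed

lemma cycle_imp_dense_cluster:
  assumes cyc: "has_cycle vertex_set (tree_edges \<union> G)"
  shows "\<exists>s\<in>{1..t}. G \<in> dense_clusters s s"
proof -
  obtain L w where w: "cyclic_walk vertex_set (tree_edges \<union> G) L w"
    using has_cycle_imp_cyclic_walk[OF cyc] by blast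
  have L: "0 < L" and wV: "\<And>k. w k \<in> vertex_set"
    using w unfolding cyclic_walk_def by auto
  define U where "U = (\<lambda>k. tree_of (w k)) ` {..<L}"
  have U: "U \<subseteq> {..<t}" "finite U" "U \<noteq> {}"
    using tree_of_mem[OF wV] L unfolding U_def by blast+
  have "card U \<le> card (G \<inter> pairs (vertices_of U))"
  proof (cases "card U = 1")
    case True
    then obtain u where u: "U = {u}" by (rule card_1_singletonE)
    have "tree_of (w k) = u" for k using cyclic_walk_tree_of_mem[OF w] u by (simp add: U_def)
    hence in_u: "w k \<in> B u" for k using tree_of_mem[OF wV] by metis
    have "u < t" using U(1) u by blast
    then obtain k where "{w k, w (Suc k)} \<in> G"
      using cyclic_walk_in_tree_uses_random_edge[OF w] in_u by blast
    moreover have "{w k, w (Suc k)} \<in> pairs (vertices_of U)"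
      using in_u cyclic_walk_step_neq[OF w] u by (simp add: pairs_def vertices_of_def)
    ultimately have "G \<inter> pairs (vertices_of U) \<noteq> {}" by blast
    moreover have "finite (pairs (vertices_of U))" using U by (intro finite_pairs finite_vertices_of)
    ultimately show ?thesis using True by (simp add: Suc_le_eq card_gt_0_iff)
  next
    case False
    moreover have "card U \<noteq> 0" using U(2,3) by simp
    ultimately have "2 \<le> card U" by linarith
    thus ?thesis using cyclic_walk_random_edges_ge_trees[OF w U_def] by blast
  qed
  hence "G \<in> dense_clusters (card U) (card U)" unfolding dense_clusters_def using U(1) by blast
  moreover have "card U \<in> {1..t}"
    using U card_mono[OF finite_lessThan U(1)] by (simp add: Suc_le_eq card_gt_0_iff)
  ultimately show ?thesis by blast
qed

lemma tree_subset_component: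
  assumes K: "K \<in> components vertex_set (tree_edges \<union> G)" and i: "i < t" "B i \<inter> K \<noteq> {}"
  shows "B i \<subseteq> K"
proof
  fix b assume b: "b \<in> B i"
  obtain a where a: "a \<in> B i" "a \<in> K" using i(2) by blast
  have "(a, b) \<in> (edge_rel (BE i))\<^sup>*"
    using trees[OF i(1)] a b by (auto simp: is_tree_def reachable_iff_edge_rel)
  moreover have "edge_rel (BE i) \<subseteq> edge_rel (tree_edges \<union> G)"
    using i(1) by (auto simp: edge_rel_def)
  ultimately have "(a, b) \<in> (edge_rel (tree_edges \<union> G))\<^sup>*" using rtrancl_mono by blast
  thus "b \<in> K" using mem_component_iff[OF K a(2)] b i(1) by auto
qed

lemma component_cluster_extends:
  assumes G: "G \<subseteq> pairs vertex_set" and K: "K \<in> components vertex_set (tree_edges \<union> G)"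
    and U: "U \<subseteq> {..<t}" "U \<noteq> {}" "vertices_of U \<subseteq> K"
    and i: "i < t" "i \<notin> U" "B i \<inter> K \<noteq> {}"
  shows "\<exists>j<t. j \<notin> U \<and> B j \<inter> K \<noteq> {} \<and>
    card (G \<inter> pairs (vertices_of U)) < card (G \<inter> pairs (vertices_of (insert j U)))"
proof -
  obtain u0 where "u0 \<in> U" using U(2) by blast
  then obtain a where a: "a \<in> vertices_of U"
    using U(1) tree_nonempty[of u0] by (auto simp: vertices_of_def)
  obtain b where b: "b \<in> B i" "b \<in> K" using i(3) by blast
  have "b \<notin> vertices_of U"
    unfolding vertices_of_def using disjoint[OF i(1)] i(2) U(1) b(1) by blast
  moreover have "a \<in> K" using a U(3) by blast
  ultimately obtain y z where yz: "y \<in> vertices_of U" "z \<in> K - vertices_of U" "{y, z} \<in> tree_edges \<union> G"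
    using component_leaving_edge[OF K is_graph_with_random_edges[OF G] _ a b(2)] by blast
  obtain u where u: "u \<in> U" "y \<in> B u" using yz(1) by (auto simp: vertices_of_def)
  have "z \<in> vertex_set" using components_subset[OF K] yz(2) by blast
  define j where "j = tree_of z"
  have j: "j < t" "z \<in> B j" using tree_of_mem[OF \<open>z \<in> vertex_set\<close>] by (auto simp: j_def)
  have "j \<notin> U" using j yz(2) by (auto simp: vertices_of_def)
  have "y \<noteq> z" using yz(1,2) by blast
  have "z \<notin> B u" using u(1) yz(2) by (auto simp: vertices_of_def)
  moreover have "u < t" using u(1) U(1) by blast
  ultimately have "{y, z} \<in> G" by (rule edge_between_trees_is_random[OF yz(3) u(2)])
  moreover have "{y, z} \<in> pairs (vertices_of (insert j U)) - pairs (vertices_of U)"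
    using u j yz(2) \<open>y \<noteq> z\<close> by (auto simp: pairs_def vertices_of_def)
  moreover have "pairs (vertices_of U) \<subseteq> pairs (vertices_of (insert j U))"
    by (intro pairs_mono) (auto simp: vertices_of_def)
  moreover have "finite (pairs (vertices_of (insert j U)))"
    using U(1) j(1) by (intro finite_pairs finite_vertices_of) auto
  ultimately have "G \<inter> pairs (vertices_of U) \<subset> G \<inter> pairs (vertices_of (insert j U))"
    by blast
  hence "card (G \<inter> pairs (vertices_of U)) < card (G \<inter> pairs (vertices_of (insert j U)))"
    by (rule psubset_card_mono[rotated])
       (use \<open>finite (pairs (vertices_of (insert j U)))\<close> in auto)
  thus ?thesis using j(1,2) \<open>j \<notin> U\<close> yz(2) by blast
qed

lemma component_has_dense_clusters:
  assumes G: "G \<subseteq> pairs vertex_set" and K: "K \<in> components vertex_set (tree_edges \<union> G)"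
    and T: "T = {i. i < t \<and> B i \<inter> K \<noteq> {}}" and j: "Suc j \<le> card T"
  shows "\<exists>U\<subseteq>T. card U = Suc j \<and> j \<le> card (G \<inter> pairs (vertices_of U))"
proof -
  have T_sub: "T \<subseteq> {..<t}" and finite_T: "finite T" using T by auto
  show ?thesis using j
  proof (induction j)
    case 0
    hence "T \<noteq> {}" by auto
    then obtain i where "i \<in> T" by blast
    thus ?case by (intro exI[of _ "{i}"]) auto
  next
    case (Suc j)
    hence "Suc j \<le> card T" by simp
    then obtain U where U: "U \<subseteq> T" "card U = Suc j" "j \<le> card (G \<inter> pairs (vertices_of U))"
      using Suc.IH by blast
    have finU: "finite U" using U(1) finite_T by (rule finite_subset)
    have "\<not> T \<subseteq> U"
    proof
      assume "T \<subseteq> U"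
      hence "card T \<le> card U" by (rule card_mono[OF finU])
      with U(2) Suc.prems show False by simp
    qed
    then obtain i where i: "i < t" "B i \<inter> K \<noteq> {}" "i \<notin> U" by (auto simp: T)
    have "vertices_of U \<subseteq> K"
      using tree_subset_component[OF K] U(1) unfolding T vertices_of_def by blast
    moreover have "U \<noteq> {}" "U \<subseteq> {..<t}" using U(1,2) T_sub by auto
    ultimately obtain k where k: "k < t" "k \<notin> U" "B k \<inter> K \<noteq> {}"
      "card (G \<inter> pairs (vertices_of U)) < card (G \<inter> pairs (vertices_of (insert k U)))"
      using component_cluster_extends[OF G K _ _ _ i(1,3,2)] by blast
    have "insert k U \<subseteq> T" using U(1) k(1,3) by (auto simp: T)
    moreover have "card (insert k U) = Suc (Suc j)" using finU k(2) U(2) by simp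
    ultimately show ?case using U(3) k(4) by (intro exI[of _ "insert k U"]) auto
  qed
qed

lemma large_component_imp_dense_cluster:
  assumes G: "G \<subseteq> pairs vertex_set" and K: "K \<in> components vertex_set (tree_edges \<union> G)"
    and big: "x * m < card K"
  shows "G \<in> dense_clusters (Suc m) m"
proof -
  define T where "T = {i. i < t \<and> B i \<inter> K \<noteq> {}}"
  have T: "T \<subseteq> {..<t}" "finite T" by (auto simp: T_def)
  have "K \<subseteq> vertices_of T"
  proof
    fix v assume "v \<in> K"
    hence "tree_of v < t" "v \<in> B (tree_of v)" using tree_of_mem components_subset[OF K] by blast+
    with \<open>v \<in> K\<close> show "v \<in> vertices_of T" unfolding T_def vertices_of_def by blast
  qed
  hence "card K \<le> card (vertices_of T)" by (rule card_mono[OF finite_vertices_of[OF T(1)]])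
  hence "x * m < card T * x" using card_vertices_of_le[OF T(1)] big by linarith
  hence "Suc m \<le> card T" by (simp add: mult.commute)
  from component_has_dense_clusters[OF G K T_def this] show ?thesis
    using T(1) unfolding dense_clusters_def by blast
qed

end

lemma cycle_cluster_bound:
  fixes p :: real assumes "0 \<le> p"
  shows "real (t choose s) * real ((s * x)\<^sup>2) ^ s / fact s * p ^ s
    \<le> (exp 2 * (real t * real x ^ 2 * p)) ^ s"
proof -
  have "real (t choose s) * real ((s * x)\<^sup>2) ^ s / fact s * p ^ s
      \<le> real t ^ s / fact s * real ((s * x)\<^sup>2) ^ s / fact s * p ^ s"
    by (intro mult_right_mono divide_right_mono binomial_le_pow_div_fact) (use assms in auto)
  also have "\<dots> = (real t * real x ^ 2 * p) ^ s * (real s ^ s / fact s)\<^sup>2"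
    by (simp add: power_mult_distrib power2_eq_square field_simps power_mult[symmetric] mult.commute)
  also have "\<dots> \<le> (real t * real x ^ 2 * p) ^ s * exp (real s) ^ 2"
    by (intro mult_left_mono power_mono power_div_fact_le_exp) (use assms in auto)
  also have "\<dots> = (exp 2 * (real t * real x ^ 2 * p)) ^ s"
    by (simp add: power_mult_distrib exp_of_nat_mult[symmetric] power2_eq_square exp_add[symmetric]
        mult.commute)
  finally show ?thesis .
qed

lemma component_cluster_bound:
  fixes p :: real assumes "0 \<le> p"
  shows "real (t choose Suc m) * real ((Suc m * x)\<^sup>2) ^ m / fact m * p ^ m
    \<le> exp 2 * real t * (exp 2 * (real t * real x ^ 2 * p)) ^ m"
proof -
  define k where "k = Suc m"
  define A where "A = real k ^ k / fact k"
  have A: "0 \<le> A" "A \<le> exp (real k)" unfolding A_def by (simp_all add: power_div_fact_le_exp)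
  have fact_k: "fact k = real k * fact m" and pow_k: "real k ^ k = real k * real k ^ m"
    unfolding k_def by simp_all
  have A_alt: "A = real k ^ m / fact m" unfolding A_def fact_k pow_k by (simp add: k_def)
  \<comment> \<open>as 2m = k + m - 1, the factor k^(2m) / (k! m!) equals A^2 / k\<close>
  have "real (k\<^sup>2) ^ m = real k ^ m * real k ^ m"
    by (simp add: power_mult[symmetric] power_add[symmetric] mult_2)
  hence k_factor: "real (k\<^sup>2) ^ m / (fact k * fact m) = A * A / real k"
    unfolding fact_k A_alt by simp
  have "real (t choose k) * real ((k * x)\<^sup>2) ^ m / fact m * p ^ m
      \<le> real t ^ k / fact k * real ((k * x)\<^sup>2) ^ m / fact m * p ^ m"
    by (intro mult_right_mono divide_right_mono binomial_le_pow_div_fact) (use assms in auto)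
  also have "\<dots> = real t * (real t * real x ^ 2 * p) ^ m * (A * A / real k)"
  proof -
    have "real ((k * x)\<^sup>2) ^ m = real (k\<^sup>2) ^ m * (real x ^ 2) ^ m" by (simp add: power_mult_distrib)
    moreover have "real t ^ k = real t * real t ^ m" by (simp add: k_def)
    ultimately show ?thesis unfolding k_factor[symmetric] by (simp add: power_mult_distrib mult_ac)
  qed
  also have "\<dots> \<le> real t * (real t * real x ^ 2 * p) ^ m * (exp (real k) * exp (real k))"
  proof (intro mult_left_mono)
    have "A * A / real k \<le> A * A" using A by (simp add: k_def divide_le_eq mult_le_cancel_left1)
    also have "\<dots> \<le> exp (real k) * exp (real k)" using A by (intro mult_mono) auto
    finally show "A * A / real k \<le> exp (real k) * exp (real k)" .
  qed (use assms in auto)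
  also have "\<dots> = exp 2 * real t * (exp 2 * (real t * real x ^ 2 * p)) ^ m"
    by (simp add: k_def exp_add[symmetric] exp_of_nat_mult[symmetric] power_mult_distrib algebra_simps)
  finally show ?thesis unfolding k_def .
qed

lemma log_threshold:
  fixes q r :: real assumes "0 \<le> q" "q \<le> exp (-1)" "exp 1 \<le> r"
  shows "\<exists>m. q ^ m \<le> inverse (r\<^sup>2) \<and> real m \<le> 3 * ln r"
proof
  define m where "m = nat \<lceil>2 * ln r\<rceil>"
  have r: "0 < r" using assms(3) exp_gt_zero[of 1] by linarith
  have "ln (exp 1) \<le> ln r" using assms(3) r by (subst ln_le_cancel_iff) auto
  hence ln_r: "1 \<le> ln r" by simp
  hence m_eq: "real m = real_of_int \<lceil>2 * ln r\<rceil>" unfolding m_def by simp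
  have m_ge: "2 * ln r \<le> real m" unfolding m_eq by (rule le_of_int_ceiling)
  have "real_of_int \<lceil>2 * ln r\<rceil> \<le> 2 * ln r + 1" by (rule of_int_ceiling_le_add_one)
  hence "real m \<le> 3 * ln r" unfolding m_eq using ln_r by linarith
  moreover have "q ^ m \<le> inverse (r\<^sup>2)"
  proof -
    have "q ^ m \<le> exp (-1) ^ m" by (rule power_mono[OF assms(2,1)])
    also have "\<dots> = exp (real m * (-1))" by (rule exp_of_nat_mult[symmetric])
    also have "\<dots> \<le> exp (- (2 * ln r))" using m_ge by simp
    also have "\<dots> = inverse (exp (ln r) * exp (ln r))" by (simp add: exp_minus exp_add[symmetric])
    also have "\<dots> = inverse (r\<^sup>2)" using r by (simp add: power2_eq_square)
    finally show ?thesis .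
  qed
  ultimately show "q ^ m \<le> inverse (r\<^sup>2) \<and> real m \<le> 3 * ln r" by blast
qed

context tree_family
begin

lemma prob_not_forest_with_small_components:
  assumes p: "0 \<le> p" "p \<le> 1" and q: "q = exp 2 * (real t * real x ^ 2 * p)" "2 * q \<le> 1"
  shows "measure_pmf.prob (random_graph vertex_set p)
    {G. \<not> (forest vertex_set (tree_edges \<union> G) \<and>
           (\<forall>K\<in>components vertex_set (tree_edges \<union> G). card K \<le> x * m))}
    \<le> 2 * q + exp 2 * real t * q ^ m"
    (is "measure_pmf.prob ?M ?Bad \<le> _")
proof -
  define Dense where "Dense = (\<Union>s\<in>{1..t}. dense_clusters s s) \<union> dense_clusters (Suc m) m"
  have "?Bad \<inter> set_pmf ?M \<subseteq> Dense"
  proof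
    fix G assume "G \<in> ?Bad \<inter> set_pmf ?M"
    hence G: "G \<subseteq> pairs vertex_set" and bad: "G \<in> ?Bad" by (auto dest: set_pmf_random_graph)
    show "G \<in> Dense"
    proof (cases "forest vertex_set (tree_edges \<union> G)")
      case False
      hence "has_cycle vertex_set (tree_edges \<union> G)"
        using is_graph_with_random_edges[OF G] by (simp add: forest_def)
      thus ?thesis using cycle_imp_dense_cluster unfolding Dense_def by blast
    next
      case True
      then obtain K where "K \<in> components vertex_set (tree_edges \<union> G)" "x * m < card K"
        using bad by (auto simp: not_le)
      thus ?thesis using large_component_imp_dense_cluster[OF G] unfolding Dense_def by blast
    qed
  qed
  hence "measure_pmf.prob ?M ?Bad \<le> measure_pmf.prob ?M Dense"
    using measure_pmf.finite_measure_mono[of "?Bad \<inter> set_pmf ?M" Dense ?M]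
    by (simp add: measure_Int_set_pmf)
  also have "\<dots> \<le> measure_pmf.prob ?M (\<Union>s\<in>{1..t}. dense_clusters s s)
      + measure_pmf.prob ?M (dense_clusters (Suc m) m)"
    unfolding Dense_def by (rule measure_Un_le) simp_all
  also have "\<dots> \<le> (\<Sum>s\<in>{1..t}. measure_pmf.prob ?M (dense_clusters s s))
      + measure_pmf.prob ?M (dense_clusters (Suc m) m)"
    by (intro add_right_mono measure_pmf.finite_measure_subadditive_finite) simp_all
  also have "\<dots> \<le> (\<Sum>s\<in>{1..t}. q ^ s) + exp 2 * real t * q ^ m"
  proof (intro add_mono sum_mono)
    show "measure_pmf.prob ?M (dense_clusters s s) \<le> q ^ s" for s
      using prob_dense_clusters[OF p, of s s] cycle_cluster_bound[OF p(1), of t s x]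
      unfolding q(1) by linarith
    show "measure_pmf.prob ?M (dense_clusters (Suc m) m) \<le> exp 2 * real t * q ^ m"
      using prob_dense_clusters[OF p, of "Suc m" m] component_cluster_bound[OF p(1), of t m x]
      unfolding q(1) by linarith
  qed
  also have "\<dots> \<le> 2 * q + exp 2 * real t * q ^ m"
    using geometric_sum_le_twice_first[of q t] q p by simp
  finally show ?thesis .
qed

lemma exists_component_bound:
  assumes p: "0 \<le> p" "p \<le> 1" and x: "1 \<le> x" "x \<le> n" and t: "real t \<le> real n / real x"
    and npx: "real n * p * real x \<le> exp (-3)" and xn: "real x / real n \<le> exp (-1)"
  shows "\<exists>m. real m \<le> 3 * ln (real n / real x) \<and>
    measure_pmf.prob (random_graph vertex_set p)
      {G. \<not> (forest vertex_set (tree_edges \<union> G) \<and>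
             (\<forall>K\<in>components vertex_set (tree_edges \<union> G). card K \<le> x * m))}
    \<le> 2 * exp 2 * (real n * p * real x) + exp 2 * (real x / real n)"
proof -
  define r where "r = real n / real x"
  define q where "q = exp 2 * (real t * real x ^ 2 * p)"
  have r: "0 < r" "real x / real n = inverse r" using x by (auto simp: r_def)
  have "inverse (exp (-1)) \<le> inverse (inverse r)"
    using xn r by (intro le_imp_inverse_le) auto
  hence "exp 1 \<le> r" by (simp add: exp_minus)
  have "real t * real x \<le> real n" using t x by (simp add: field_simps)
  hence "real t * real x ^ 2 * p \<le> real n * p * real x"
    using mult_right_mono[of "real t * real x" "real n" "real x * p"] p by (simp add: power2_eq_square mult_ac)
  hence q_le: "q \<le> exp 2 * (real n * p * real x)" unfolding q_def by simp
  also have "\<dots> \<le> exp 2 * exp (-3)" using npx by simp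
  finally have "q \<le> exp (-1)" by (simp add: exp_add[symmetric])
  have "0 \<le> q" unfolding q_def using p by simp
  obtain m where m: "q ^ m \<le> inverse (r\<^sup>2)" "real m \<le> 3 * ln r"
    using log_threshold[OF \<open>0 \<le> q\<close> \<open>q \<le> exp (-1)\<close> \<open>exp 1 \<le> r\<close>] by blast
  have "exp (-1::real) \<le> 1 / 2"
    using exp_ge_add_one_self[of 1] by (simp add: exp_minus field_simps)
  hence "2 * q \<le> 1" using \<open>q \<le> exp (-1)\<close> by linarith
  have "real t * q ^ m \<le> r * inverse (r\<^sup>2)"
    using t m(1) r(1) \<open>0 \<le> q\<close> by (intro mult_mono) (auto simp: r_def)
  also have "\<dots> = real x / real n" using r by (simp add: power2_eq_square)
  finally have "exp 2 * (real t * q ^ m) \<le> exp 2 * (real x / real n)" by (rule mult_left_mono) simp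
  hence "2 * q + exp 2 * real t * q ^ m \<le> 2 * exp 2 * (real n * p * real x) + exp 2 * (real x / real n)"
    using q_le by (simp add: mult.assoc)
  with prob_not_forest_with_small_components[OF p q_def \<open>2 * q \<le> 1\<close>, of m] m(2) show ?thesis
    unfolding r_def by (intro exI[of _ m]) auto
qed

lemma prob_forest_with_small_components_ge:
  assumes p: "0 \<le> p" "p \<le> 1" and x: "1 \<le> x" "x \<le> n" and t: "real t \<le> real n / real x"
    and npx: "real n * p * real x \<le> exp (-3)" and xn: "real x / real n \<le> exp (-1)"
  shows "1 - (2 * exp 2 * (real n * p * real x) + exp 2 * (real x / real n))
    \<le> measure_pmf.prob (random_graph vertex_set p)
        {G. forest vertex_set (tree_edges \<union> G) \<and>
            (\<forall>K\<in>components vertex_set (tree_edges \<union> G).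
               real (card K) \<le> 3 * real x * ln (real n / real x))}"
    (is "_ \<le> measure_pmf.prob ?M ?Good")
proof -
  obtain m where m: "real m \<le> 3 * ln (real n / real x)"
    and bad: "measure_pmf.prob ?M {G. \<not> (forest vertex_set (tree_edges \<union> G) \<and>
                  (\<forall>K\<in>components vertex_set (tree_edges \<union> G). card K \<le> x * m))}
      \<le> 2 * exp 2 * (real n * p * real x) + exp 2 * (real x / real n)"
      (is "measure_pmf.prob ?M ?Bad \<le> _")
    using exists_component_bound[OF assms] by blast
  have "UNIV - ?Bad \<subseteq> ?Good"
  proof
    fix G assume "G \<in> UNIV - ?Bad"
    hence forest: "forest vertex_set (tree_edges \<union> G)"
      and small: "\<And>K. K \<in> components vertex_set (tree_edges \<union> G) \<Longrightarrow> card K \<le> x * m"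
      by auto
    have "real (card K) \<le> 3 * real x * ln (real n / real x)"
      if "K \<in> components vertex_set (tree_edges \<union> G)" for K
    proof -
      have "real (card K) \<le> real x * real m" using small[OF that] by (simp flip: of_nat_mult)
      also have "\<dots> \<le> real x * (3 * ln (real n / real x))" using m by (rule mult_left_mono) simp
      finally show ?thesis by simp
    qed
    thus "G \<in> ?Good" using forest by blast
  qed
  hence "measure_pmf.prob ?M (UNIV - ?Bad) \<le> measure_pmf.prob ?M ?Good"
    by (intro measure_pmf.finite_measure_mono) auto
  thus ?thesis using bad measure_pmf.prob_compl[of ?Bad ?M] by simp
qed

end

lemma forest_with_small_components_whp:
  fixes p :: "nat \<Rightarrow> real" and x t :: "nat \<Rightarrow> nat"
    and BV :: "nat \<Rightarrow> nat \<Rightarrow> 'a set" and BE :: "nat \<Rightarrow> nat \<Rightarrow> 'a set set"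
  assumes p: "\<forall>n. 0 \<le> p n \<and> p n \<le> 1"
    and x: "\<forall>\<^sub>F n in sequentially. 1 \<le> x n \<and> x n \<le> n"
    and x_small: "(\<lambda>n. real (x n) / real n) \<longlonglongrightarrow> 0"
    and npx_small: "(\<lambda>n. real n * p n * real (x n)) \<longlonglongrightarrow> 0"
    and t: "\<forall>\<^sub>F n in sequentially. real (t n) \<le> real n / real (x n)"
    and trees: "\<forall>\<^sub>F n in sequentially. \<forall>i < t n. is_tree (BV n i) (BE n i) \<and> card (BV n i) \<le> x n"
    and disjoint: "\<forall>\<^sub>F n in sequentially. \<forall>i < t n. \<forall>j < t n. i \<noteq> j \<longrightarrow> BV n i \<inter> BV n j = {}"
  shows "(\<lambda>n. measure_pmf.prob (random_graph (\<Union>i<t n. BV n i) (p n))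
          {G. forest (\<Union>i<t n. BV n i) ((\<Union>i<t n. BE n i) \<union> G) \<and>
              (\<forall>K \<in> components (\<Union>i<t n. BV n i) ((\<Union>i<t n. BE n i) \<union> G).
                 real (card K) \<le> 3 * real (x n) * ln (real n / real (x n)))})
       \<longlonglongrightarrow> 1" (is "?P \<longlonglongrightarrow> 1")
proof -
  define L where "L n = 1 - (2 * exp 2 * (real n * p n * real (x n)) + exp 2 * (real (x n) / real n))"
    for n
  have "\<forall>\<^sub>F n in sequentially. real n * p n * real (x n) < exp (-3)"
    using order_tendstoD(2)[OF npx_small] by simp
  moreover have "\<forall>\<^sub>F n in sequentially. real (x n) / real n < exp (-1)"
    using order_tendstoD(2)[OF x_small] by simp
  ultimately have "\<forall>\<^sub>F n in sequentially. L n \<le> ?P n"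
    using x t trees disjoint
  proof eventually_elim
    case (elim n)
    interpret tree_family "t n" "BV n" "BE n" "x n" using elim by unfold_locales auto
    show ?case unfolding L_def
      by (rule prob_forest_with_small_components_ge) (use elim p in auto)
  qed
  moreover have "\<forall>\<^sub>F n in sequentially. ?P n \<le> 1" by (simp add: measure_pmf.prob_le_1)
  moreover have "L \<longlonglongrightarrow> 1 - (2 * exp 2 * 0 + exp 2 * 0)"
    unfolding L_def by (intro tendsto_intros npx_small x_small)
  hence "L \<longlonglongrightarrow> 1" by simp
  ultimately show ?thesis by (rule tendsto_sandwich[OF _ _ _ tendsto_const])
qed

theorem mainTheorem11:
  shows "\<exists>C::real. C > 0 \<and>
    (\<forall>(p :: nat \<Rightarrow> real) (x :: nat \<Rightarrow> nat) (t :: nat \<Rightarrow> nat)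
       (BV :: nat \<Rightarrow> nat \<Rightarrow> nat set) (BE :: nat \<Rightarrow> nat \<Rightarrow> nat set set).
       (\<forall>n. 0 \<le> p n \<and> p n \<le> 1) \<and>
       (\<forall>\<^sub>F n in sequentially. 1 \<le> x n \<and> x n \<le> n) \<and>
       (\<lambda>n. real (x n) / real n) \<longlonglongrightarrow> 0 \<and>
       (\<lambda>n. real n * p n * real (x n)) \<longlonglongrightarrow> 0 \<and>
       (\<forall>\<^sub>F n in sequentially. real n / (2 * real (x n)) \<le> real (t n) \<and> real (t n) \<le> real n / real (x n)) \<and>
       (\<forall>\<^sub>F n in sequentially. \<forall>i < t n. is_tree (BV n i) (BE n i) \<and> card (BV n i) \<le> x n) \<and>
       (\<forall>\<^sub>F n in sequentially. \<forall>i < t n. \<forall>j < t n. i \<noteq> j \<longrightarrow> BV n i \<inter> BV n j = {})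
     \<longrightarrow>
       (\<lambda>n. measure_pmf.prob (random_graph (\<Union>i<t n. BV n i) (p n))
          {G. forest (\<Union>i<t n. BV n i) ((\<Union>i<t n. BE n i) \<union> G) \<and>
              (\<forall>K \<in> components (\<Union>i<t n. BV n i) ((\<Union>i<t n. BE n i) \<union> G).
                 real (card K) \<le> C * real (x n) * ln (real n / real (x n)))})
       \<longlonglongrightarrow> 1)"
  by (intro exI[of _ "3::real"] conjI allI impI, simp, elim conjE,
      rule forest_with_small_components_whp) (simp_all add: eventually_conj_iff)

end
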